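(* Consider the ViSE model described in the context, with $n$ participants, $\ell$ egoists and $g=n-\ell$ group members ($1\le \ell\le n-1$), environment parameters $\mu\in\mathbb{R}$, $\sigma>0$, majority threshold $\alpha\in[0,1]$ and group claims threshold $t\in\mathbb{R}$. Let $\gamma=\alpha+\delta-1$ with $\delta=\ell/n$, $P=F\!\left(\frac{(\mu-t)\sqrt{g}}{\sigma}\right)$, $Q=1-P$, $f_0=f\!\left(\frac{(\mu-t)\sqrt{g}}{\sigma}\right)$. Then the mathematical expectation of the capital increment $\widetilde{d}_{\mathcal{G}}$ of a group member in one voting step is $$\mathrm{M}(\widetilde{d}_{\mathcal{G}})=F_{\gamma n}\left(\mu P+\frac{\sigma f_0}{\sqrt g}\right)+F_{\alpha n}\left(\mu Q-\frac{\sigma f_0}{\sqrt g}\right).$$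
   Context: ViSE model (one voting step). A society consists of $n$ participants: $\ell$ "egoists" and $g=n-\ell$ "group members", with $1\le\ell\le n-1$; $\delta=\ell/n$. Fix $\mu\in\mathbb{R}$, $\sigma>0$, a majority threshold $\alpha\in[0,1]$ and a group claims threshold $t\in\mathbb{R}$. A proposal is a random vector $(\zeta_1,\dots,\zeta_n)$ of independent $N(\mu,\sigma^2)$ random variables, $\zeta_i$ being the proposed capital increment of participant $i$. Each egoist votes for the proposal iff his own component is strictly positive. All group members vote for the proposal iff the arithmetic mean of the group members' components is strictly greater than $t$; otherwise they all vote against. The proposal is accepted iff the number of votes for it is strictly greater than $\alpha n$. If accepted, each participant's capital increment equals his component; otherwise it is $0$. $F$ and $f$ denote the standard normal distribution function and density. Let $p=F(\mu/\sigma)$, $q=1-p$, and for real $\xi$ let $F_\xi=\sum_{x=\max(0,[\xi]+1)}^{\ell}\binom{\ell}{x}p^xq^{\ell-x}$ (with $[\xi]$ the integer part of $\xi$ and an empty sum equal to $0$), i.e. $F_\xi$ is the probability that the number of egoists' votes for the proposal exceeds $\xi$. *)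

theory Defs
  imports "HOL-Probability.Probability"
begin

definition Phi :: "real \<Rightarrow> real" where
  "Phi = cdf (density lborel std_normal_density)"

abbreviation phi :: "real \<Rightarrow> real" where
  "phi \<equiv> std_normal_density"

(* Participants are indexed 0..n-1; egoists are {..<l}, group members are {l..<n}.
   A proposal is a point of the product of n independent N(mu, sigma^2) distributions. *)
definition vise_proposal :: "nat \<Rightarrow> real \<Rightarrow> real \<Rightarrow> (nat \<Rightarrow> real) measure" where
  "vise_proposal n \<mu> \<sigma> = PiM {..<n} (\<lambda>_. density lborel (normal_density \<mu> \<sigma>))"

definition vise_votes :: "nat \<Rightarrow> nat \<Rightarrow> real \<Rightarrow> (nat \<Rightarrow> real) \<Rightarrow> nat" where
  "vise_votes n l t \<zeta> =
     card {i \<in> {..<l}. \<zeta> i > 0}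
     + (if (\<Sum>i\<in>{l..<n}. \<zeta> i) / real (n - l) > t then n - l else 0)"

definition vise_accepted :: "nat \<Rightarrow> nat \<Rightarrow> real \<Rightarrow> real \<Rightarrow> (nat \<Rightarrow> real) \<Rightarrow> bool" where
  "vise_accepted n l \<alpha> t \<zeta> \<longleftrightarrow> real (vise_votes n l t \<zeta>) > \<alpha> * real n"

definition vise_increment :: "nat \<Rightarrow> nat \<Rightarrow> real \<Rightarrow> real \<Rightarrow> nat \<Rightarrow> (nat \<Rightarrow> real) \<Rightarrow> real" where
  "vise_increment n l \<alpha> t j \<zeta> = (if vise_accepted n l \<alpha> t \<zeta> then \<zeta> j else 0)"

definition F_xi :: "nat \<Rightarrow> real \<Rightarrow> real \<Rightarrow> real" where
  "F_xi l p \<xi> = (\<Sum>x = nat (max 0 (\<lfloor>\<xi>\<rfloor> + 1))..l. real (l choose x) * p ^ x * (1 - p) ^ (l - x))"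

end

theory Submission
  imports Defs "HOL-Real_Asymp.Real_Asymp"
begin

text \<open>
  The proposal is accepted iff either the group approves (the mean of its components exceeds
  \<open>t\<close>) and more than \<open>\<gamma>n\<close> egoists vote for it, or the group disapproves and more than
  \<open>\<alpha>n\<close> egoists do.  Hence the increment of a group member \<open>j\<close> is
  \<open>\<zeta>\<^sub>j [mean > t] [V > \<gamma>n] + \<zeta>\<^sub>j [mean \<le> t] [V > \<alpha>n]\<close>, where \<open>V\<close> counts
  the positive egoist components.  In each product the first factor depends only on the group
  coordinates and the second only on the egoists' coordinates, so the expectation factorises;
  \<open>V\<close> is binomial with parameters \<open>\<ell>\<close> and \<open>p\<close>, which yields \<open>F\<^sub>\<xi>\<close>.  By
  exchangeability of the group coordinates, \<open>E[\<zeta>\<^sub>j; mean > t] = E[S; S > g t] / g\<close> for the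
  group sum \<open>S \<sim> N(g\<mu>, g\<sigma>\<^sup>2)\<close>, and the truncated first moment of a normal law gives
  \<open>\<mu> P + \<sigma> f\<^sub>0 / \<surd>g\<close>; the expectation on the complementary event is \<open>\<mu>\<close> minus this.
\<close>

section \<open>Truncated moments of the normal distribution\<close>

lemma std_normal_density_minus [simp]: "std_normal_density (- x) = std_normal_density x"
  by (simp add: std_normal_density_def)

lemma has_bochner_integral_std_normal_first_moment_atLeast:
  "has_bochner_integral lborel (\<lambda>x. x * std_normal_density x * indicator {a..} x) (std_normal_density a)"
proof -
  have deriv: "DERIV (\<lambda>x. - std_normal_density x) x :> x * std_normal_density x" for x
    unfolding std_normal_density_def by (auto intro!: derivative_eq_intros simp: field_simps)
  have lim: "((\<lambda>x. - std_normal_density x) \<longlongrightarrow> 0) at_top"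
    unfolding std_normal_density_def by real_asymp
  have nonneg: "has_bochner_integral lborel (\<lambda>x. x * std_normal_density x * indicator {b..} x)
      (std_normal_density b)" if "0 \<le> b" for b
  proof -
    have "(\<integral>\<^sup>+x. ennreal (x * std_normal_density x) * indicator {b..} x \<partial>lborel)
        = ennreal (0 - (- std_normal_density b))"
      by (rule nn_integral_FTC_atLeast[OF _ deriv _ lim]) (use that in auto)
    then have "(\<integral>\<^sup>+x. ennreal (x * std_normal_density x * indicator {b..} x) \<partial>lborel)
        = ennreal (std_normal_density b)"
      by (simp add: indicator_mult_ennreal mult.commute)
    then show ?thesis
      by (intro has_bochner_integral_nn_integral) (use that in \<open>auto split: split_indicator\<close>)
  qed
  show ?thesis
  proof (cases "0 \<le> a")
    case True
    then show ?thesis by (rule nonneg)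
  next
    case False
    have "has_bochner_integral lborel (\<lambda>x. x * std_normal_density x * indicator {a..0} x)
        (- std_normal_density 0 - - std_normal_density a)"
    proof (rule has_bochner_integral_FTC_Icc_real[OF _ deriv])
      show "isCont (\<lambda>x. x * std_normal_density x) x" for x
        unfolding std_normal_density_def by (intro continuous_intros) auto
    qed (use False in auto)
    note has_bochner_integral_add[OF this nonneg[OF order_refl]]
    moreover have "(\<lambda>x. x * std_normal_density x * indicator {a..0} x
        + x * std_normal_density x * indicator {0..} x)
        = (\<lambda>x. x * std_normal_density x * indicator {a..} x)"
      using False by (auto simp: fun_eq_iff split: split_indicator)
    ultimately show ?thesis by simp
  qed
qed

lemma integral_std_normal_greaterThan:
  "(\<integral>x. std_normal_density x * indicator {a<..} x \<partial>lborel) = Phi (- a)"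
proof -
  have "Phi (- a) = (\<integral>x. indicator {..- a} x \<partial>density lborel std_normal_density)"
    by (simp add: Phi_def cdf_def)
  also have "\<dots> = (\<integral>x. std_normal_density x * indicator {..- a} x \<partial>lborel)"
    by (subst integral_density) auto
  also have "\<dots> = (\<integral>x. std_normal_density (0 + -1 * x) * indicator {..- a} (0 + -1 * x) \<partial>lborel)"
    by (subst lborel_integral_real_affine[where c="-1" and t=0]) auto
  also have "\<dots> = (\<integral>x. std_normal_density x * indicator {a<..} x \<partial>lborel)"
    by (intro integral_cong_AE)
       (auto intro!: eventually_mono[OF AE_lborel_singleton[of a]] split: split_indicator)
  finally show ?thesis ..
qed

lemma integral_std_normal_first_moment_greaterThan:
  "(\<integral>x. x * std_normal_density x * indicator {a<..} x \<partial>lborel) = std_normal_density a"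
proof -
  have "(\<integral>x. x * std_normal_density x * indicator {a<..} x \<partial>lborel)
      = (\<integral>x. x * std_normal_density x * indicator {a..} x \<partial>lborel)"
    by (intro integral_cong_AE)
       (auto intro!: eventually_mono[OF AE_lborel_singleton[of a]] split: split_indicator)
  then show ?thesis
    using has_bochner_integral_std_normal_first_moment_atLeast[of a]
    by (simp add: has_bochner_integral_iff)
qed

lemma normal_density_affine:
  assumes "\<sigma> > 0"
  shows "normal_density \<mu> \<sigma> (\<mu> + \<sigma> * u) = std_normal_density u / \<sigma>"
proof -
  have "sqrt (2 * pi * \<sigma>\<^sup>2) = sqrt (2 * pi) * \<sigma>"
    using assms by (simp add: real_sqrt_mult)
  moreover have "(\<sigma> * u)\<^sup>2 / (2 * \<sigma>\<^sup>2) = u\<^sup>2 / 2"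
    using assms by (simp add: field_simps)
  ultimately show ?thesis
    by (simp add: normal_density_def)
qed

lemma integral_normal_density_greaterThan:
  assumes \<sigma>: "\<sigma> > 0"
  shows "(\<integral>x. normal_density \<mu> \<sigma> x * indicator {c<..} x \<partial>lborel) = Phi ((\<mu> - c) / \<sigma>)"
proof -
  have "(\<integral>x. normal_density \<mu> \<sigma> x * indicator {c<..} x \<partial>lborel)
      = (\<integral>x. \<sigma> * (normal_density \<mu> \<sigma> (\<mu> + \<sigma> * x) * indicator {c<..} (\<mu> + \<sigma> * x)) \<partial>lborel)"
    using \<sigma> by (subst lborel_integral_real_affine[where c=\<sigma> and t=\<mu>]) auto
  also have "\<dots> = (\<integral>x. std_normal_density x * indicator {(c - \<mu>) / \<sigma><..} x \<partial>lborel)"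
    using \<sigma> unfolding normal_density_affine[OF \<sigma>]
    by (intro Bochner_Integration.integral_cong) (auto simp: field_simps split: split_indicator)
  also have "\<dots> = Phi ((\<mu> - c) / \<sigma>)"
    by (simp add: integral_std_normal_greaterThan minus_divide_left)
  finally show ?thesis .
qed

lemma integral_normal_density_first_moment_greaterThan:
  assumes \<sigma>: "\<sigma> > 0"
  shows "(\<integral>x. normal_density \<mu> \<sigma> x * (x * indicator {c<..} x) \<partial>lborel)
     = \<mu> * Phi ((\<mu> - c) / \<sigma>) + \<sigma> * std_normal_density ((\<mu> - c) / \<sigma>)"
proof -
  define a where "a = (c - \<mu>) / \<sigma>"
  have int0: "integrable lborel (\<lambda>x. std_normal_density x * indicator {a<..} x)"
    by (intro integrable_real_mult_indicator) auto
  have "integrable lborel (\<lambda>x. std_normal_density x * x ^ 1)"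
    by (rule integrable_std_normal_moment)
  then have int1: "integrable lborel (\<lambda>x. x * std_normal_density x * indicator {a<..} x)"
    by (intro integrable_real_mult_indicator) (auto simp: mult.commute)
  have "(\<integral>x. normal_density \<mu> \<sigma> x * (x * indicator {c<..} x) \<partial>lborel)
      = (\<integral>x. \<sigma> * (normal_density \<mu> \<sigma> (\<mu> + \<sigma> * x)
            * ((\<mu> + \<sigma> * x) * indicator {c<..} (\<mu> + \<sigma> * x))) \<partial>lborel)"
    using \<sigma> by (subst lborel_integral_real_affine[where c=\<sigma> and t=\<mu>]) auto
  also have "\<dots> = (\<integral>x. \<mu> * (std_normal_density x * indicator {a<..} x)
      + \<sigma> * (x * std_normal_density x * indicator {a<..} x) \<partial>lborel)"
    using \<sigma> unfolding a_def normal_density_affine[OF \<sigma>]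
    by (intro Bochner_Integration.integral_cong) (auto simp: field_simps split: split_indicator)
  also have "\<dots> = \<mu> * Phi (- a) + \<sigma> * std_normal_density a"
    using int0 int1
    by (simp add: integral_std_normal_greaterThan integral_std_normal_first_moment_greaterThan)
  also have "\<dots> = \<mu> * Phi ((\<mu> - c) / \<sigma>) + \<sigma> * std_normal_density ((\<mu> - c) / \<sigma>)"
    unfolding a_def by (metis minus_diff_eq minus_divide_left std_normal_density_minus)
  finally show ?thesis .
qed

lemma measure_normal_greaterThan:
  assumes "\<sigma> > 0"
  shows "measure (density lborel (normal_density \<mu> \<sigma>)) {c<..} = Phi ((\<mu> - c) / \<sigma>)"
proof -
  have "measure (density lborel (normal_density \<mu> \<sigma>)) {c<..}
      = (\<integral>x. indicator {c<..} x \<partial>density lborel (normal_density \<mu> \<sigma>))"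
    by simp
  also have "\<dots> = (\<integral>x. normal_density \<mu> \<sigma> x * indicator {c<..} x \<partial>lborel)"
    by (subst integral_density) auto
  finally show ?thesis
    using integral_normal_density_greaterThan[OF assms] by simp
qed

lemma integrable_normal_density_id:
  fixes \<mu> \<sigma> :: real
  assumes "\<sigma> > 0"
  shows "integrable (density lborel (normal_density \<mu> \<sigma>)) (\<lambda>x. x)"
  using assms integrable_normal_moment_nz_1 by (simp add: integrable_density)

section \<open>Products of identical probability spaces\<close>

lemma measurable_PiM_sets_borel:
  assumes "sets N = sets borel"
  shows "measurable (PiM I (\<lambda>_. N)) K = measurable (PiM I (\<lambda>_. borel)) K"
  by (rule measurable_cong_sets) (auto intro!: sets_PiM_cong simp: assms)

lemma measurable_PiM_component_borel:
  assumes "sets N = sets borel" "i \<in> I"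
  shows "(\<lambda>\<omega>. \<omega> i) \<in> borel_measurable (PiM I (\<lambda>_. N))"
  using measurable_component_singleton[OF assms(2), of "\<lambda>_. N"]
  by (simp add: measurable_cong_sets[OF refl assms(1)])

lemma borel_measurable_PiM_sum_components:
  fixes N :: "real measure"
  assumes "sets N = sets borel" "G \<subseteq> I"
  shows "(\<lambda>\<omega>. \<Sum>k\<in>G. \<omega> k) \<in> borel_measurable (PiM I (\<lambda>_. N))"
proof -
  have "(\<lambda>\<omega>. \<omega> k) \<in> borel_measurable (PiM I (\<lambda>_. N))" if "k \<in> G" for k
    using assms that by (intro measurable_PiM_component_borel) auto
  then show ?thesis
    by (rule borel_measurable_sum[of G "\<lambda>k \<omega>. \<omega> k"])
qed

lemma indep_vars_PiM_components:
  assumes N: "prob_space N" and sN: "sets N = sets borel" and I: "I \<noteq> {}"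
  shows "prob_space.indep_vars (PiM I (\<lambda>_. N)) (\<lambda>_. borel) (\<lambda>i \<omega>. \<omega> i) I"
proof -
  interpret product_prob_space "\<lambda>_. N" I
    using N by (intro product_prob_spaceI)
  have component: "distr (PiM I (\<lambda>_. N)) borel (\<lambda>\<omega>. \<omega> i) = N" if "i \<in> I" for i
    using PiM_component[OF that] by (metis distr_cong sN)
  have "distr (PiM I (\<lambda>_. N)) (PiM I (\<lambda>_. borel)) (\<lambda>\<omega>. \<lambda>i\<in>I. \<omega> i)
      = distr (PiM I (\<lambda>_. N)) (PiM I (\<lambda>_. N)) (\<lambda>\<omega>. \<omega>)"
    by (rule distr_cong) (auto simp: sN space_PiM intro!: sets_PiM_cong)
  also have "\<dots> = PiM I (\<lambda>i. distr (PiM I (\<lambda>_. N)) borel (\<lambda>\<omega>. \<omega> i))"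
    by (auto simp: component intro!: PiM_cong)
  finally show ?thesis
    using measurable_component_singleton[of _ I "\<lambda>_. N"]
    by (subst prob_space.indep_vars_iff_distr_eq_PiM'[OF prob_space_PiM[OF N] I])
       (auto simp: measurable_PiM_sets_borel[OF sN])
qed

lemma integral_PiM_reindex:
  fixes h :: "('i \<Rightarrow> 'a) \<Rightarrow> real"
  assumes N: "prob_space N" and \<pi>: "inj_on \<pi> I" "\<pi> \<in> I \<rightarrow> I"
    and h: "h \<in> borel_measurable (PiM I (\<lambda>_. N))"
  shows "(\<integral>\<omega>. h (\<lambda>i\<in>I. \<omega> (\<pi> i)) \<partial>PiM I (\<lambda>_. N)) = integral\<^sup>L (PiM I (\<lambda>_. N)) h"
proof -
  have "(\<lambda>\<omega>. \<lambda>i\<in>I. \<omega> (\<pi> i)) \<in> measurable (PiM I (\<lambda>_. N)) (PiM I (\<lambda>_. N))"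
    using \<pi> by (intro measurable_restrict measurable_component_singleton) auto
  then have "(\<integral>\<omega>. h (\<lambda>i\<in>I. \<omega> (\<pi> i)) \<partial>PiM I (\<lambda>_. N))
      = integral\<^sup>L (distr (PiM I (\<lambda>_. N)) (PiM I (\<lambda>_. N)) (\<lambda>\<omega>. \<lambda>i\<in>I. \<omega> (\<pi> i))) h"
    using h by (rule integral_distr[symmetric])
  also have "\<dots> = integral\<^sup>L (PiM I (\<lambda>_. N)) h"
    using distr_PiM_reindex[of I "\<lambda>_. N", OF N \<pi>] by simp
  finally show ?thesis .
qed

lemma integrable_PiM_component:
  fixes N :: "real measure"
  assumes N: "prob_space N" and sN: "sets N = sets borel" and i: "i \<in> I"
    and int: "integrable N (\<lambda>x. x)"
  shows "integrable (PiM I (\<lambda>_. N)) (\<lambda>\<omega>. \<omega> i)"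
proof -
  interpret product_prob_space "\<lambda>_. N" I
    using N by (intro product_prob_spaceI)
  have "(\<lambda>\<omega>. \<omega> i) \<in> measurable (PiM I (\<lambda>_. N)) N"
    using i by (rule measurable_component_singleton)
  then show ?thesis
    using integrable_distr_eq[of "\<lambda>\<omega>. \<omega> i" "PiM I (\<lambda>_. N)" N "\<lambda>x. x"] int sN
    by (simp add: PiM_component[OF i])
qed

lemma has_bochner_integral_PiM_disjoint_blocks_mult:
  fixes N :: "real measure" and f h :: "('i \<Rightarrow> real) \<Rightarrow> real"
  assumes N: "prob_space N" and sN: "sets N = sets borel" and I: "I \<noteq> {}"
    and blocks: "G \<inter> E = {}" "G \<subseteq> I" "E \<subseteq> I"
    and f: "f \<in> borel_measurable (PiM G (\<lambda>_. borel))"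
    and h: "h \<in> borel_measurable (PiM E (\<lambda>_. borel))"
    and int_f: "integrable (PiM I (\<lambda>_. N)) (\<lambda>\<omega>. f (restrict \<omega> G))"
    and int_h: "integrable (PiM I (\<lambda>_. N)) (\<lambda>\<omega>. h (restrict \<omega> E))"
  shows "has_bochner_integral (PiM I (\<lambda>_. N)) (\<lambda>\<omega>. f (restrict \<omega> G) * h (restrict \<omega> E))
    ((\<integral>\<omega>. f (restrict \<omega> G) \<partial>PiM I (\<lambda>_. N)) * (\<integral>\<omega>. h (restrict \<omega> E) \<partial>PiM I (\<lambda>_. N)))"
proof -
  interpret prob_space "PiM I (\<lambda>_. N)"
    using N by (rule prob_space_PiM)
  have "indep_var (PiM G (\<lambda>_. borel)) (\<lambda>\<omega>. restrict \<omega> G) (PiM E (\<lambda>_. borel)) (\<lambda>\<omega>. restrict \<omega> E)"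
    using indep_var_restrict[OF indep_vars_PiM_components[OF N sN I] blocks] by simp
  then have "indep_var borel (\<lambda>\<omega>. f (restrict \<omega> G)) borel (\<lambda>\<omega>. h (restrict \<omega> E))"
    using indep_var_compose[OF _ f h] by (simp add: comp_def)
  then show ?thesis
    using int_f int_h
    by (simp add: has_bochner_integral_iff indep_var_integrable indep_var_lebesgue_integral)
qed

lemma integral_PiM_component_times_function_of_sum_swap:
  fixes N :: "real measure" and \<phi> :: "real \<Rightarrow> real" and i j :: 'i
  assumes N: "prob_space N" and sN: "sets N = sets borel"
    and G: "finite G" "G \<subseteq> I" "i \<in> G" "j \<in> G" and \<phi>: "\<phi> \<in> borel_measurable borel"
  shows "(\<integral>\<omega>. \<omega> i * \<phi> (\<Sum>k\<in>G. \<omega> k) \<partial>PiM I (\<lambda>_. N))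
    = (\<integral>\<omega>. \<omega> j * \<phi> (\<Sum>k\<in>G. \<omega> k) \<partial>PiM I (\<lambda>_. N))"
proof -
  define \<omega>' where "\<omega>' \<omega> = (\<lambda>k\<in>I. \<omega> (Transposition.transpose i j k))" for \<omega> :: "'i \<Rightarrow> real"
  have "(\<Sum>k\<in>G. \<omega>' \<omega> k) = (\<Sum>k\<in>G. \<omega> k)" for \<omega>
  proof -
    have "(\<Sum>k\<in>G. \<omega>' \<omega> k) = (\<Sum>k\<in>G. \<omega> (Transposition.transpose i j k))"
      using G by (intro sum.cong) (auto simp: \<omega>'_def)
    also have "\<dots> = (\<Sum>k\<in>G. \<omega> k)"
      using G by (intro sum.reindex_bij_betw) simp
    finally show ?thesis .
  qed
  then have swap: "\<omega>' \<omega> j * \<phi> (\<Sum>k\<in>G. \<omega>' \<omega> k) = \<omega> i * \<phi> (\<Sum>k\<in>G. \<omega> k)" for \<omega>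
    using G by (auto simp: \<omega>'_def)
  have "Transposition.transpose i j \<in> I \<rightarrow> I"
    using G by (auto simp: Transposition.transpose_def)
  moreover have "(\<lambda>\<omega>. \<omega> j * \<phi> (\<Sum>k\<in>G. \<omega> k)) \<in> borel_measurable (PiM I (\<lambda>_. N))"
    using G by (intro borel_measurable_times measurable_PiM_component_borel[OF sN]
        measurable_compose[OF borel_measurable_PiM_sum_components[OF sN G(2)] \<phi>]) auto
  ultimately have "(\<integral>\<omega>. \<omega>' \<omega> j * \<phi> (\<Sum>k\<in>G. \<omega>' \<omega> k) \<partial>PiM I (\<lambda>_. N))
      = (\<integral>\<omega>. \<omega> j * \<phi> (\<Sum>k\<in>G. \<omega> k) \<partial>PiM I (\<lambda>_. N))"
    unfolding \<omega>'_def
    by (rule integral_PiM_reindex[where h="\<lambda>\<omega>. \<omega> j * \<phi> (\<Sum>k\<in>G. \<omega> k)", OF N inj_on_transpose])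
  then show ?thesis
    unfolding swap .
qed

text \<open>Exchangeability: each of the \<open>card G\<close> summands contributes equally.\<close>

lemma integral_PiM_component_times_function_of_sum:
  fixes N :: "real measure" and \<phi> :: "real \<Rightarrow> real" and j :: 'i
  assumes N: "prob_space N" and sN: "sets N = sets borel" and int: "integrable N (\<lambda>x. x)"
    and G: "finite G" "G \<subseteq> I" "j \<in> G"
    and \<phi>: "\<phi> \<in> borel_measurable borel" "\<And>x. \<bar>\<phi> x\<bar> \<le> B"
  shows "(\<integral>\<omega>. \<omega> j * \<phi> (\<Sum>i\<in>G. \<omega> i) \<partial>PiM I (\<lambda>_. N))
    = (\<integral>\<omega>. (\<Sum>i\<in>G. \<omega> i) * \<phi> (\<Sum>i\<in>G. \<omega> i) \<partial>PiM I (\<lambda>_. N)) / card G"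
proof -
  define M where "M = PiM I (\<lambda>_. N)"
  have integrable: "integrable M (\<lambda>\<omega>. \<omega> i * \<phi> (\<Sum>k\<in>G. \<omega> k))" if "i \<in> G" for i
  proof (rule Bochner_Integration.integrable_bound)
    show "integrable M (\<lambda>\<omega>. B * \<omega> i)"
      unfolding M_def using G that
      by (intro integrable_mult_right integrable_PiM_component[OF N sN _ int]) auto
    show "(\<lambda>\<omega>. \<omega> i * \<phi> (\<Sum>k\<in>G. \<omega> k)) \<in> borel_measurable M"
      unfolding M_def using G that
      by (intro borel_measurable_times measurable_PiM_component_borel[OF sN]
          measurable_compose[OF borel_measurable_PiM_sum_components[OF sN G(2)] \<phi>(1)]) auto
    have "0 \<le> B"
      using order_trans[OF abs_ge_zero \<phi>(2)] .
    then show "AE \<omega> in M. norm (\<omega> i * \<phi> (\<Sum>k\<in>G. \<omega> k)) \<le> norm (B * \<omega> i)"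
      using mult_left_mono[OF \<phi>(2) abs_ge_zero] by (intro AE_I2) (simp add: abs_mult mult.commute)
  qed
  have "real (card G) * (\<integral>\<omega>. \<omega> j * \<phi> (\<Sum>k\<in>G. \<omega> k) \<partial>M)
      = (\<Sum>i\<in>G. \<integral>\<omega>. \<omega> i * \<phi> (\<Sum>k\<in>G. \<omega> k) \<partial>M)"
    unfolding M_def
    using integral_PiM_component_times_function_of_sum_swap[OF N sN G(1,2) _ G(3) \<phi>(1)] by simp
  also have "\<dots> = (\<integral>\<omega>. (\<Sum>i\<in>G. \<omega> i) * \<phi> (\<Sum>i\<in>G. \<omega> i) \<partial>M)"
    using integrable by (subst Bochner_Integration.integral_sum[symmetric]) (auto simp: sum_distrib_right)
  finally have "real (card G) * (\<integral>\<omega>. \<omega> j * \<phi> (\<Sum>k\<in>G. \<omega> k) \<partial>M)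
      = (\<integral>\<omega>. (\<Sum>i\<in>G. \<omega> i) * \<phi> (\<Sum>i\<in>G. \<omega> i) \<partial>M)" .
  moreover have "real (card G) > 0"
    using G card_gt_0_iff by auto
  ultimately show ?thesis
    by (simp add: M_def field_simps)
qed

section \<open>Counting positive coordinates\<close>

lemma sum_subsets_card_greater_eq_F_xi:
  fixes E :: "'i set" and \<xi> p :: real
  assumes E: "finite E"
  shows "(\<Sum>A | A \<subseteq> E \<and> \<xi> < real (card A). p ^ card A * (1 - p) ^ (card E - card A))
    = F_xi (card E) p \<xi>"
proof -
  define S where "S = {A. A \<subseteq> E \<and> \<xi> < real (card A)}"
  define k0 where "k0 = nat (max 0 (\<lfloor>\<xi>\<rfloor> + 1))"
  have greater_iff: "\<xi> < real k \<longleftrightarrow> k0 \<le> k" for k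
  proof -
    have "\<xi> < real k \<longleftrightarrow> \<lfloor>\<xi>\<rfloor> < int k"
      by (metis floor_less_iff of_int_of_nat_eq)
    then show ?thesis
      unfolding k0_def by linarith
  qed
  have S: "finite S"
    unfolding S_def using E by (auto intro: finite_subset[of _ "Pow E"])
  have card_range: "card ` S \<subseteq> {k0..card E}"
    using E greater_iff card_mono unfolding S_def by auto
  have "(\<Sum>A\<in>S. p ^ card A * (1 - p) ^ (card E - card A))
      = (\<Sum>k\<in>{k0..card E}. \<Sum>A | A \<in> S \<and> card A = k. p ^ card A * (1 - p) ^ (card E - card A))"
    by (rule sum.group[OF S _ card_range, symmetric]) simp
  also have "\<dots> = (\<Sum>k\<in>{k0..card E}. real (card E choose k) * p ^ k * (1 - p) ^ (card E - k))"
  proof (rule sum.cong[OF refl])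
    fix k assume k: "k \<in> {k0..card E}"
    then have "{A. A \<in> S \<and> card A = k} = {A. A \<subseteq> E \<and> card A = k}"
      using greater_iff unfolding S_def by auto
    then show "(\<Sum>A | A \<in> S \<and> card A = k. p ^ card A * (1 - p) ^ (card E - card A))
        = real (card E choose k) * p ^ k * (1 - p) ^ (card E - k)"
      using n_subsets[OF E, of k] by simp
  qed
  finally show ?thesis
    unfolding S_def F_xi_def k0_def .
qed

lemma
  fixes N :: "real measure" and E A :: "'i set"
  assumes N: "prob_space N" and sN: "sets N = sets borel" and E: "finite E" "E \<subseteq> I" and A: "A \<subseteq> E"
  defines "X \<equiv> {\<omega> \<in> space (PiM I (\<lambda>_. N)). {i \<in> E. 0 < \<omega> i} = A}"
  shows sets_PiM_positive_components_eq: "X \<in> sets (PiM I (\<lambda>_. N))"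
    and measure_PiM_positive_components_eq: "measure (PiM I (\<lambda>_. N)) X
      = measure N {0<..} ^ card A * (1 - measure N {0<..}) ^ (card E - card A)"
proof -
  interpret product_prob_space "\<lambda>_. N" I
    using N by (intro product_prob_spaceI)
  define p where "p = measure N {0<..}"
  define C where "C i = (if i \<in> A then {0<..} else {..0::real})" for i :: 'i
  have C: "C i \<in> sets N" for i
    by (simp add: C_def sN)
  have "{i \<in> E. 0 < \<omega> i} = A \<longleftrightarrow> (\<forall>i\<in>E. \<omega> i \<in> C i)" for \<omega> :: "'i \<Rightarrow> real"
    using A by (auto simp: C_def not_less)
  then have X: "X = prod_emb I (\<lambda>_. N) E (PiE E C)"
    using E(2) by (auto simp: X_def prod_emb_iff space_PiM PiE_iff)
  show "X \<in> sets (PiM I (\<lambda>_. N))"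
    unfolding X using E C by (intro sets_PiM_I) auto
  have "measure N {..0} = 1 - p"
    using prob_space.prob_compl[OF N, of "{0<..}"] sN
    by (simp add: p_def sets_eq_imp_space_eq[OF sN] Compl_eq_Diff_UNIV[symmetric] not_less
        flip: Compl_greaterThan)
  then have "measure (PiM I (\<lambda>_. N)) X = (\<Prod>i\<in>E. if i \<in> A then p else 1 - p)"
    unfolding X using E C by (subst measure_PiM_emb) (auto simp: C_def p_def intro!: prod.cong)
  also have "\<dots> = p ^ card A * (1 - p) ^ (card E - card A)"
  proof -
    have "card (E \<inter> - A) = card E - card A"
      using A E by (simp flip: Diff_eq add: card_Diff_subset finite_subset)
    then show ?thesis
      using A E by (simp add: prod.If_cases Int_absorb1)
  qed
  finally show "measure (PiM I (\<lambda>_. N)) X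
      = measure N {0<..} ^ card A * (1 - measure N {0<..}) ^ (card E - card A)"
    by (simp add: p_def)
qed

lemma integral_PiM_card_positive_components_greater:
  fixes N :: "real measure" and E :: "'i set" and \<xi> :: real
  assumes N: "prob_space N" and sN: "sets N = sets borel" and E: "finite E" "E \<subseteq> I"
  shows "(\<integral>\<omega>. of_bool (\<xi> < real (card {i \<in> E. 0 < \<omega> i})) \<partial>PiM I (\<lambda>_. N))
    = F_xi (card E) (measure N {0<..}) \<xi>"
proof -
  define M where "M = PiM I (\<lambda>_. N)"
  define S where "S = {A. A \<subseteq> E \<and> \<xi> < real (card A)}"
  define X where "X A = {\<omega> \<in> space M. {i \<in> E. 0 < \<omega> i} = A}" for A
  interpret prob_space M
    unfolding M_def using N by (rule prob_space_PiM)
  have S: "finite S"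
    unfolding S_def using E by (auto intro: finite_subset[of _ "Pow E"])
  have X: "X A \<in> sets M" if "A \<in> S" for A
    using sets_PiM_positive_components_eq[OF N sN E] that by (simp add: X_def M_def S_def)
  have "(\<integral>\<omega>. of_bool (\<xi> < real (card {i \<in> E. 0 < \<omega> i})) \<partial>M)
      = (\<integral>\<omega>. (\<Sum>A\<in>S. indicator (X A) \<omega>) \<partial>M :: real)"
  proof (rule Bochner_Integration.integral_cong[OF refl])
    fix \<omega> assume "\<omega> \<in> space M"
    then have "(\<Sum>A\<in>S. indicator (X A) \<omega> :: real) = (\<Sum>A\<in>S. of_bool ({i \<in> E. 0 < \<omega> i} = A))"
      by (intro sum.cong) (auto simp: X_def)
    also have "\<dots> = of_bool (\<xi> < real (card {i \<in> E. 0 < \<omega> i}))"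
      using S by (simp add: of_bool_def sum.delta S_def)
    finally show "of_bool (\<xi> < real (card {i \<in> E. 0 < \<omega> i})) = (\<Sum>A\<in>S. indicator (X A) \<omega> :: real)"
      by simp
  qed
  also have "\<dots> = (\<Sum>A\<in>S. measure M (X A))"
    using X by (simp add: emeasure_eq_measure)
  also have "\<dots> = (\<Sum>A\<in>S. measure N {0<..} ^ card A * (1 - measure N {0<..}) ^ (card E - card A))"
    using measure_PiM_positive_components_eq[OF N sN E]
    by (intro sum.cong) (auto simp: X_def M_def S_def)
  also have "\<dots> = F_xi (card E) (measure N {0<..}) \<xi>"
    unfolding S_def using E(1) by (rule sum_subsets_card_greater_eq_F_xi)
  finally show ?thesis
    by (simp add: M_def)
qed

lemma borel_measurable_card_positive_components:
  fixes E :: "'i set"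
  assumes "finite E"
  shows "(\<lambda>x :: 'i \<Rightarrow> real. real (card {i \<in> E. 0 < x i})) \<in> borel_measurable (PiM E (\<lambda>_. borel))"
proof -
  have "real (card {i \<in> E. 0 < x i}) = (\<Sum>i\<in>E. of_bool (0 < x i))" for x :: "'i \<Rightarrow> real"
    using assms by (simp add: of_bool_def sum.If_cases Int_def)
  moreover have "(\<lambda>x :: 'i \<Rightarrow> real. \<Sum>i\<in>E. of_bool (0 < x i) :: real) \<in> borel_measurable (PiM E (\<lambda>_. borel))"
    by (intro borel_measurable_sum) measurable
  ultimately show ?thesis
    by simp
qed

lemma has_bochner_integral_PiM_times_card_positive_components:
  fixes N :: "real measure" and f :: "('i \<Rightarrow> real) \<Rightarrow> real" and j :: 'i and \<xi> :: real
  assumes N: "prob_space N" and sN: "sets N = sets borel" and int: "integrable N (\<lambda>x. x)"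
    and blocks: "G \<inter> E = {}" "G \<subseteq> I" "E \<subseteq> I" "finite E" "j \<in> G"
    and f: "f \<in> borel_measurable (PiM G (\<lambda>_. borel))" "\<And>x. \<bar>f x\<bar> \<le> \<bar>x j\<bar>"
  defines "M \<equiv> PiM I (\<lambda>_. N)"
  shows "has_bochner_integral M (\<lambda>\<omega>. f (restrict \<omega> G) * of_bool (\<xi> < real (card {i \<in> E. 0 < \<omega> i})))
    ((\<integral>\<omega>. f (restrict \<omega> G) \<partial>M) * F_xi (card E) (measure N {0<..}) \<xi>)"
proof -
  interpret prob_space M
    unfolding M_def using N by (rule prob_space_PiM)
  define accept :: "('i \<Rightarrow> real) \<Rightarrow> real"
    where "accept x = of_bool (\<xi> < real (card {i \<in> E. 0 < x i}))" for x
  have accept_restrict: "accept (restrict \<omega> E) = accept \<omega>" for \<omega>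
    unfolding accept_def by (metis (mono_tags, lifting) restrict_apply')
  have accept_meas: "accept \<in> borel_measurable (PiM E (\<lambda>_. borel))"
    unfolding accept_def using borel_measurable_card_positive_components[OF blocks(4)] by measurable
  have int_f: "integrable M (\<lambda>\<omega>. f (restrict \<omega> G))"
  proof (rule Bochner_Integration.integrable_bound)
    show "integrable M (\<lambda>\<omega>. \<omega> j)"
      unfolding M_def using blocks by (intro integrable_PiM_component[OF N sN _ int]) auto
    show "(\<lambda>\<omega>. f (restrict \<omega> G)) \<in> borel_measurable M"
      unfolding M_def measurable_PiM_sets_borel[OF sN]
      by (rule measurable_compose[OF measurable_restrict_subset[OF blocks(2)] f(1)])
    show "AE \<omega> in M. norm (f (restrict \<omega> G)) \<le> norm (\<omega> j)"
      using f(2)[of "restrict _ G"] blocks(5) by (intro AE_I2) simp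
  qed
  have int_accept: "integrable M (\<lambda>\<omega>. accept (restrict \<omega> E))"
  proof (rule integrable_const_bound[where B=1])
    show "(\<lambda>\<omega>. accept (restrict \<omega> E)) \<in> borel_measurable M"
      unfolding M_def measurable_PiM_sets_borel[OF sN]
      by (rule measurable_compose[OF measurable_restrict_subset[OF blocks(3)] accept_meas])
  qed (simp add: accept_def)
  have I: "I \<noteq> {}"
    using blocks by auto
  have "has_bochner_integral M (\<lambda>\<omega>. f (restrict \<omega> G) * accept (restrict \<omega> E))
      ((\<integral>\<omega>. f (restrict \<omega> G) \<partial>M) * (\<integral>\<omega>. accept (restrict \<omega> E) \<partial>M))"
    using int_f int_accept unfolding M_def
    by (rule has_bochner_integral_PiM_disjoint_blocks_mult[OF N sN I blocks(1-3) f(1) accept_meas])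
  moreover have "(\<integral>\<omega>. accept (restrict \<omega> E) \<partial>M) = F_xi (card E) (measure N {0<..}) \<xi>"
    unfolding accept_restrict unfolding accept_def M_def
    by (rule integral_PiM_card_positive_components_greater[OF N sN blocks(4,3)])
  ultimately show ?thesis
    unfolding accept_restrict by (simp add: accept_def)
qed

section \<open>Normally distributed coordinates\<close>

lemma distributed_PiM_normal_component:
  assumes \<sigma>: "\<sigma> > 0" and i: "i \<in> I"
  shows "distributed (PiM I (\<lambda>_. density lborel (normal_density \<mu> \<sigma>))) lborel (\<lambda>\<omega>. \<omega> i)
    (normal_density \<mu> \<sigma>)"
proof -
  define N where "N = density lborel (normal_density \<mu> \<sigma>)"
  interpret product_prob_space "\<lambda>_. N" I
    using \<sigma> by (intro product_prob_spaceI) (simp add: N_def prob_space_normal_density)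
  have "distr (PiM I (\<lambda>_. N)) lborel (\<lambda>\<omega>. \<omega> i) = distr (PiM I (\<lambda>_. N)) N (\<lambda>\<omega>. \<omega> i)"
    by (rule distr_cong) (simp_all add: N_def)
  also have "\<dots> = N"
    using i by (rule PiM_component)
  finally show ?thesis
    using measurable_component_singleton[OF i, of "\<lambda>_. N"]
    by (simp add: distributed_def N_def)
qed

lemma distributed_PiM_normal_sum:
  fixes \<mu> \<sigma> :: real
  assumes \<sigma>: "\<sigma> > 0" and G: "finite G" "G \<noteq> {}" "G \<subseteq> I"
  shows "distributed (PiM I (\<lambda>_. density lborel (normal_density \<mu> \<sigma>))) lborel (\<lambda>\<omega>. \<Sum>i\<in>G. \<omega> i)
    (normal_density (card G * \<mu>) (\<sigma> * sqrt (card G)))"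
proof -
  define N where "N = density lborel (normal_density \<mu> \<sigma>)"
  have N: "prob_space N" "sets N = sets borel"
    using \<sigma> by (simp_all add: N_def prob_space_normal_density)
  interpret prob_space "PiM I (\<lambda>_. N)"
    using N(1) by (rule prob_space_PiM)
  have "indep_vars (\<lambda>_. borel) (\<lambda>i \<omega>. \<omega> i) I"
    using G by (intro indep_vars_PiM_components[OF N]) auto
  then have "indep_vars (\<lambda>_. borel) (\<lambda>i \<omega>. \<omega> i) G"
    using G(3) by (rule indep_vars_subset)
  moreover have "distributed (PiM I (\<lambda>_. N)) lborel (\<lambda>\<omega>. \<omega> i) (normal_density \<mu> \<sigma>)" if "i \<in> G" for i
    unfolding N_def using G that by (intro distributed_PiM_normal_component[OF \<sigma>]) auto
  ultimately have "distributed (PiM I (\<lambda>_. N)) lborel (\<lambda>\<omega>. \<Sum>i\<in>G. \<omega> i)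
      (normal_density (\<Sum>i\<in>G. \<mu>) (sqrt (\<Sum>i\<in>G. \<sigma>\<^sup>2)))"
    using G \<sigma> by (intro sum_indep_normal) auto
  then show ?thesis
    using \<sigma> by (simp add: N_def real_sqrt_mult mult.commute)
qed

lemma integral_PiM_normal_component_mean_greater:
  fixes j :: 'i and \<mu> \<sigma> t :: real
  assumes \<sigma>: "\<sigma> > 0" and G: "finite G" "G \<subseteq> I" "j \<in> G"
  defines "y \<equiv> (\<mu> - t) * sqrt (card G) / \<sigma>"
  shows "(\<integral>\<omega>. (if t < (\<Sum>i\<in>G. \<omega> i) / card G then \<omega> j else 0)
      \<partial>PiM I (\<lambda>_. density lborel (normal_density \<mu> \<sigma>)))
    = \<mu> * Phi y + \<sigma> * std_normal_density y / sqrt (card G)"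
proof -
  define N where "N = density lborel (normal_density \<mu> \<sigma>)"
  define M where "M = PiM I (\<lambda>_. N)"
  \<comment> \<open>an opaque name for \<open>sqrt (card G)\<close> keeps the simplifier's square-root rules out of the
    field algebra below\<close>
  define r where "r = sqrt (card G)"
  have r: "r > 0" "real (card G) = r * r"
    using G card_gt_0_iff by (auto simp: r_def)
  have N: "prob_space N" "sets N = sets borel"
    using \<sigma> by (simp_all add: N_def prob_space_normal_density)
  have "(\<integral>\<omega>. (if t < (\<Sum>i\<in>G. \<omega> i) / card G then \<omega> j else 0) \<partial>M)
      = (\<integral>\<omega>. \<omega> j * indicator {t * card G<..} (\<Sum>i\<in>G. \<omega> i) \<partial>M)"
    using r by (intro Bochner_Integration.integral_cong) (auto simp: field_simps)
  also have "\<dots> = (\<integral>\<omega>. (\<Sum>i\<in>G. \<omega> i) * indicator {t * card G<..} (\<Sum>i\<in>G. \<omega> i) \<partial>M) / card G"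
    unfolding M_def
    by (rule integral_PiM_component_times_function_of_sum[OF N _ G, where B=1])
       (auto simp: N_def integrable_normal_density_id[OF \<sigma>])
  also have "(\<integral>\<omega>. (\<Sum>i\<in>G. \<omega> i) * indicator {t * card G<..} (\<Sum>i\<in>G. \<omega> i) \<partial>M)
      = (\<integral>x. normal_density (card G * \<mu>) (\<sigma> * r) x * (x * indicator {t * card G<..} x) \<partial>lborel)"
    using distributed_integral[OF distributed_PiM_normal_sum[OF \<sigma> G(1) _ G(2), of \<mu>],
        of "\<lambda>x. x * indicator {t * card G<..} x", symmetric] G(3)
    by (auto simp: M_def N_def r_def)
  also have "\<dots> = card G * \<mu> * Phi y + \<sigma> * r * std_normal_density y"
  proof -
    have "(r * r * \<mu> - t * (r * r)) / (\<sigma> * r) = y"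
      using r \<sigma> by (simp add: y_def r_def[symmetric] field_simps)
    then show ?thesis
      unfolding r(2) using \<sigma> r by (simp add: integral_normal_density_first_moment_greaterThan)
  qed
  also have "(card G * \<mu> * Phi y + \<sigma> * r * std_normal_density y) / card G
      = \<mu> * Phi y + \<sigma> * std_normal_density y / r"
    unfolding r(2) using r by (simp add: field_simps)
  finally show ?thesis
    by (simp add: M_def N_def r_def)
qed

lemma integral_PiM_normal_component_mean_not_greater:
  fixes j :: 'i and \<mu> \<sigma> t :: real
  assumes \<sigma>: "\<sigma> > 0" and G: "finite G" "G \<subseteq> I" "j \<in> G"
  defines "y \<equiv> (\<mu> - t) * sqrt (card G) / \<sigma>"
  shows "(\<integral>\<omega>. (if t < (\<Sum>i\<in>G. \<omega> i) / card G then 0 else \<omega> j)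
      \<partial>PiM I (\<lambda>_. density lborel (normal_density \<mu> \<sigma>)))
    = \<mu> * (1 - Phi y) - \<sigma> * std_normal_density y / sqrt (card G)"
proof -
  define N where "N = density lborel (normal_density \<mu> \<sigma>)"
  define M where "M = PiM I (\<lambda>_. N)"
  have N: "prob_space N" "sets N = sets borel"
    using \<sigma> by (simp_all add: N_def prob_space_normal_density)
  interpret prob_space M
    unfolding M_def using N(1) by (rule prob_space_PiM)
  have int_j: "integrable M (\<lambda>\<omega>. \<omega> j)"
    unfolding M_def using G
    by (intro integrable_PiM_component[OF N]) (auto simp: N_def integrable_normal_density_id[OF \<sigma>])
  have int_gain: "integrable M (\<lambda>\<omega>. if t < (\<Sum>i\<in>G. \<omega> i) / card G then \<omega> j else 0)"
  proof (rule Bochner_Integration.integrable_bound[OF int_j])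
    have [measurable]: "(\<lambda>\<omega>. \<omega> j) \<in> borel_measurable M"
      "(\<lambda>\<omega>. \<Sum>i\<in>G. \<omega> i) \<in> borel_measurable M"
      unfolding M_def using G
      by (auto intro: measurable_PiM_component_borel[OF N(2)] borel_measurable_PiM_sum_components[OF N(2)])
    show "(\<lambda>\<omega>. if t < (\<Sum>i\<in>G. \<omega> i) / card G then \<omega> j else 0) \<in> borel_measurable M"
      by measurable
  qed auto
  have "distributed M lborel (\<lambda>\<omega>. \<omega> j) (normal_density \<mu> \<sigma>)"
    unfolding M_def N_def using G by (intro distributed_PiM_normal_component[OF \<sigma>]) auto
  then have mean_j: "(\<integral>\<omega>. \<omega> j \<partial>M) = \<mu>"
    by (rule normal_distributed_expectation[OF \<sigma>])
  have "(\<integral>\<omega>. (if t < (\<Sum>i\<in>G. \<omega> i) / card G then 0 else \<omega> j) \<partial>M)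
      = \<mu> - (\<integral>\<omega>. (if t < (\<Sum>i\<in>G. \<omega> i) / card G then \<omega> j else 0) \<partial>M)"
  proof -
    have "(\<integral>\<omega>. (if t < (\<Sum>i\<in>G. \<omega> i) / card G then 0 else \<omega> j) \<partial>M)
        = (\<integral>\<omega>. \<omega> j - (if t < (\<Sum>i\<in>G. \<omega> i) / card G then \<omega> j else 0) \<partial>M)"
      by (intro Bochner_Integration.integral_cong) auto
    with int_j int_gain mean_j show ?thesis
      by simp
  qed
  then show ?thesis
    using integral_PiM_normal_component_mean_greater[OF \<sigma> G, where \<mu>=\<mu> and t=t]
    by (simp add: M_def N_def y_def algebra_simps)
qed

lemma vise_increment_eq:
  fixes \<omega> :: "nat \<Rightarrow> real" and t :: real
  assumes "l < n"
  defines "approve \<equiv> t < (\<Sum>i\<in>{l..<n}. \<omega> i) / real (n - l)"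
    and "egoist_votes \<equiv> real (card {i \<in> {..<l}. 0 < \<omega> i})"
  shows "vise_increment n l \<alpha> t j \<omega>
    = (if approve then \<omega> j else 0) * of_bool ((\<alpha> + real l / real n - 1) * real n < egoist_votes)
      + (if approve then 0 else \<omega> j) * of_bool (\<alpha> * real n < egoist_votes)"
proof -
  have "(\<alpha> + real l / real n - 1) * real n = \<alpha> * real n - real (n - l)"
    using assms(1) by (simp add: field_simps of_nat_diff)
  then show ?thesis
    unfolding vise_increment_def vise_accepted_def vise_votes_def approve_def egoist_votes_def
    by auto
qed

lemma has_bochner_integral_vise_increment:
  fixes n l j :: nat and \<mu> \<sigma> \<alpha> t :: real
  assumes \<sigma>: "\<sigma> > 0" and ln: "l < n" and j: "l \<le> j" "j < n"
  defines "gain \<equiv> \<lambda>\<omega>. if t < (\<Sum>i\<in>{l..<n}. \<omega> i) / real (n - l) then \<omega> j else 0"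
    and "loss \<equiv> \<lambda>\<omega>. if t < (\<Sum>i\<in>{l..<n}. \<omega> i) / real (n - l) then 0 else \<omega> j"
  shows "has_bochner_integral (vise_proposal n \<mu> \<sigma>) (vise_increment n l \<alpha> t j)
    (integral\<^sup>L (vise_proposal n \<mu> \<sigma>) gain * F_xi l (Phi (\<mu> / \<sigma>)) ((\<alpha> + real l / real n - 1) * real n)
      + integral\<^sup>L (vise_proposal n \<mu> \<sigma>) loss * F_xi l (Phi (\<mu> / \<sigma>)) (\<alpha> * real n))"
proof -
  have blocks: "{l..<n} \<inter> {..<l} = {}" "{l..<n} \<subseteq> {..<n}" "{..<l} \<subseteq> {..<n}" "finite {..<l}"
      "j \<in> {l..<n}"
    using j by auto
  have restrict: "gain (restrict \<omega> {l..<n}) = gain \<omega>" "loss (restrict \<omega> {l..<n}) = loss \<omega>" for \<omega>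
    using blocks(5) by (simp_all add: gain_def loss_def)
  have measurable: "gain \<in> borel_measurable (PiM {l..<n} (\<lambda>_. borel))"
      "loss \<in> borel_measurable (PiM {l..<n} (\<lambda>_. borel))"
    unfolding gain_def loss_def using blocks(5) by measurable
  have bounded: "\<bar>gain x\<bar> \<le> \<bar>x j\<bar>" "\<bar>loss x\<bar> \<le> \<bar>x j\<bar>" for x
    by (simp_all add: gain_def loss_def)
  have N: "prob_space (density lborel (normal_density \<mu> \<sigma>))"
    "sets (density lborel (normal_density \<mu> \<sigma>)) = sets borel"
    "integrable (density lborel (normal_density \<mu> \<sigma>)) (\<lambda>x. x)"
    using \<sigma> by (simp_all add: prob_space_normal_density integrable_normal_density_id)
  have p: "measure (density lborel (normal_density \<mu> \<sigma>)) {0<..} = Phi (\<mu> / \<sigma>)"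
    using measure_normal_greaterThan[OF \<sigma>, of \<mu> 0] by simp
  have "vise_increment n l \<alpha> t j = (\<lambda>\<omega>.
      gain \<omega> * of_bool ((\<alpha> + real l / real n - 1) * real n < real (card {i \<in> {..<l}. 0 < \<omega> i}))
      + loss \<omega> * of_bool (\<alpha> * real n < real (card {i \<in> {..<l}. 0 < \<omega> i})))"
    by (simp add: fun_eq_iff vise_increment_eq[OF ln] gain_def loss_def)
  then show ?thesis
    unfolding vise_proposal_def
    by (simp only: has_bochner_integral_add[OF
        has_bochner_integral_PiM_times_card_positive_components[OF N blocks measurable(1) bounded(1),
          unfolded restrict card_lessThan p]
        has_bochner_integral_PiM_times_card_positive_components[OF N blocks measurable(2) bounded(2),
          unfolded restrict card_lessThan p]])
qed

theorem proposition2: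
  fixes n l j :: nat and \<mu> \<sigma> \<alpha> t :: real
  assumes "1 \<le> l" and "l \<le> n - 1"
    and "\<sigma> > 0" and "0 \<le> \<alpha>" and "\<alpha> \<le> 1"
    and "l \<le> j" and "j < n"
  shows "(let g = n - l; \<delta> = real l / real n; \<gamma> = \<alpha> + \<delta> - 1;
              p = Phi (\<mu> / \<sigma>);
              P = Phi ((\<mu> - t) * sqrt (real g) / \<sigma>); Q = 1 - P;
              f0 = phi ((\<mu> - t) * sqrt (real g) / \<sigma>)
          in integral\<^sup>L (vise_proposal n \<mu> \<sigma>) (vise_increment n l \<alpha> t j)
             = F_xi l p (\<gamma> * real n) * (\<mu> * P + \<sigma> * f0 / sqrt (real g))
               + F_xi l p (\<alpha> * real n) * (\<mu> * Q - \<sigma> * f0 / sqrt (real g)))"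
proof -
  have "l < n"
    using assms(1,2) by linarith
  note increment = has_bochner_integral_vise_increment[OF assms(3) this assms(6,7), of \<mu> \<alpha> t]
  have group: "finite {l..<n}" "{l..<n} \<subseteq> {..<n}" "j \<in> {l..<n}"
    using assms(6,7) by auto
  note gain = integral_PiM_normal_component_mean_greater[OF assms(3) group, where \<mu>=\<mu> and t=t]
    and loss = integral_PiM_normal_component_mean_not_greater[OF assms(3) group, where \<mu>=\<mu> and t=t]
  show ?thesis
    using increment gain loss by (simp add: has_bochner_integral_iff vise_proposal_def Let_def mult.commute)
qed

end
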